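(* Let $Y$ be a real Banach space and $X$ a closed linear subspace of $Y$, and let $q\colon Y^*\to X^*$ be the restriction map $q(y^* )=y^*|_X$. Put $\mathcal{HB}(S_{X^*}):=\{y^*\in Y^*:\ \|y^*\|=1,\ \|q(y^* )\|=1\}$. Then $X$ has property U in $Y$ if and only if the restriction $q|_{\mathcal{HB}(S_{X^*})}\colon \mathcal{HB}(S_{X^*})\to S_{X^*}$ (which is always onto) is one-to-one. Moreover, if this is the case, then $q|_{\mathcal{HB}(S_{X^*})}$ is a homeomorphism from $\mathcal{HB}(S_{X^*})$ onto $S_{X^*}$, both endowed with the relative weak$^*$ topologies.
   Context: A closed subspace $X$ of a Banach space $Y$ has property U in $Y$ if every $x^*\in X^*$ has a unique Hahn–Banach (norm-preserving) extension to $Y$, i.e. for every $x^*\in X^*$ there is exactly one $y^*\in Y^*$ with $y^*|_X=x^*$ and $\|y^*\|=\|x^*\|$. $S_Z$ denotes the unit sphere of a Banach space $Z$. *)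

theory Defs
  imports "HOL-Analysis.Analysis"
begin

text \<open>Dual of a subspace X (a set): functionals that are
  linear and bounded on X, represented extensionally (value 0 outside X).
  The weak-star topology is the topology of pointwise convergence, i.e. the
  product topology on the function type 'a => real (instance from Function_Topology),
  restricted to the relevant subsets.\<close>

definition dual_space :: "('a::real_normed_vector \<Rightarrow> real) set" where
  "dual_space = {f. bounded_linear f}"

definition sub_dual :: "'a::real_normed_vector set \<Rightarrow> ('a \<Rightarrow> real) set" where
  "sub_dual X = {f. (\<forall>x\<in>X. \<forall>y\<in>X. f (x + y) = f x + f y)
                  \<and> (\<forall>c. \<forall>x\<in>X. f (c *\<^sub>R x) = c * f x)
                  \<and> (\<exists>K. \<forall>x\<in>X. \<bar>f x\<bar> \<le> K * norm x)
                  \<and> (\<forall>x. x \<notin> X \<longrightarrow> f x = 0)}"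

definition sub_dual_norm :: "'a::real_normed_vector set \<Rightarrow> ('a \<Rightarrow> real) \<Rightarrow> real" where
  "sub_dual_norm X f = Sup {\<bar>f x\<bar> | x. x \<in> X \<and> norm x \<le> 1}"

definition restr :: "'a set \<Rightarrow> ('a \<Rightarrow> real) \<Rightarrow> ('a \<Rightarrow> real)" where
  "restr X f = (\<lambda>x. if x \<in> X then f x else 0)"

definition property_U :: "'a::real_normed_vector set \<Rightarrow> bool" where
  "property_U X \<longleftrightarrow> (\<forall>g \<in> sub_dual X. \<exists>!f. f \<in> dual_space \<and> restr X f = g
                          \<and> onorm f = sub_dual_norm X g)"

definition HB_set :: "'a::real_normed_vector set \<Rightarrow> ('a \<Rightarrow> real) set" where
  "HB_set X = {f \<in> dual_space. onorm f = 1 \<and> sub_dual_norm X (restr X f) = 1}"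

definition sub_dual_sphere :: "'a::real_normed_vector set \<Rightarrow> ('a \<Rightarrow> real) set" where
  "sub_dual_sphere X = {g \<in> sub_dual X. sub_dual_norm X g = 1}"

end

theory Submission
  imports Defs
begin

(* Everything rests on the Hahn-Banach theorem,
  proved here in its sublinear form: by Zorn's lemma there is a minimal sublinear functional
  below p, and a minimal sublinear functional is linear.  Hahn-Banach makes q map HB onto S.
  If some x^* had two distinct norm-preserving extensions, rescaling both to norm one would give
  two distinct elements of HB with the same restriction; so property U is injectivity of q on HB.
  For the homeomorphism, HB is the part of the weak-star compact dual unit ball B lying over S,
  so q maps a relatively closed set HB \<inter> T onto S \<inter> q(B \<inter> T), the trace of a compact and
  therefore closed set; a closed continuous bijection is a homeomorphism. *)

definition sublinear :: "('a::real_vector \<Rightarrow> real) \<Rightarrow> bool" where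
  "sublinear p \<longleftrightarrow> (\<forall>x y. p (x + y) \<le> p x + p y) \<and> (\<forall>c x. 0 \<le> c \<longrightarrow> p (c *\<^sub>R x) = c * p x)"

lemma sublinear_add_le: "sublinear p \<Longrightarrow> p (x + y) \<le> p x + p y"
  unfolding sublinear_def by blast

lemma sublinear_scaleR: "sublinear p \<Longrightarrow> 0 \<le> c \<Longrightarrow> p (c *\<^sub>R x) = c * p x"
  unfolding sublinear_def by blast

lemma sublinear_0: "sublinear p \<Longrightarrow> p 0 = 0"
  using sublinear_scaleR[of p 0 0] by simp

lemma sublinear_neg_le: "sublinear p \<Longrightarrow> - p (- x) \<le> p x"
  using sublinear_add_le[of p x "- x"] sublinear_0[of p] by simp

lemma sublinearI_pos_scale_le:
  assumes add: "\<And>x y. p (x + y) \<le> p x + p y"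
    and scale: "\<And>c x. 0 < c \<Longrightarrow> p (c *\<^sub>R x) \<le> c * p x"
  shows "sublinear p"
proof -
  have pos: "p (c *\<^sub>R x) = c * p x" if "0 < c" for c x
  proof -
    have "p x = p (inverse c *\<^sub>R (c *\<^sub>R x))" using that by simp
    also have "\<dots> \<le> inverse c * p (c *\<^sub>R x)" using that by (intro scale) simp
    finally have "c * p x \<le> p (c *\<^sub>R x)" using that by (simp add: field_simps)
    then show ?thesis using scale[OF that, of x] by linarith
  qed
  moreover have "p 0 = 0"
    using pos[of 2 0] by simp
  ultimately have "p (c *\<^sub>R x) = c * p x" if "0 \<le> c" for c x
    using that by (cases "c = 0") auto
  then show ?thesis
    unfolding sublinear_def using add by blast
qed

lemma le_cINF_add_cINF:
  fixes f g :: "'i \<Rightarrow> real"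
  assumes "A \<noteq> {}" "B \<noteq> {}" and "\<And>i j. i \<in> A \<Longrightarrow> j \<in> B \<Longrightarrow> a \<le> f i + g j"
  shows "a \<le> (INF i\<in>A. f i) + (INF j\<in>B. g j)"
proof -
  have "a - f i \<le> (INF j\<in>B. g j)" if "i \<in> A" for i
    using assms that by (intro cINF_greatest) (auto simp: algebra_simps)
  then have "a - (INF j\<in>B. g j) \<le> (INF i\<in>A. f i)"
    using assms by (intro cINF_greatest) (auto simp: algebra_simps)
  then show ?thesis by simp
qed

lemma le_mult_cINF:
  fixes f :: "'i \<Rightarrow> real"
  assumes "A \<noteq> {}" "0 < c" and "\<And>i. i \<in> A \<Longrightarrow> a \<le> c * f i"
  shows "a \<le> c * (INF i\<in>A. f i)"
proof -
  have "a / c \<le> (INF i\<in>A. f i)"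
    using assms by (intro cINF_greatest) (auto simp: divide_le_eq mult.commute)
  then show ?thesis using assms(2) by (simp add: divide_le_eq mult.commute)
qed

lemma sublinear_cINF_chain:
  assumes "C \<noteq> {}" and sub: "\<And>q. q \<in> C \<Longrightarrow> sublinear q"
    and chain: "\<And>q q'. q \<in> C \<Longrightarrow> q' \<in> C \<Longrightarrow> q \<le> q' \<or> q' \<le> q"
  shows "sublinear (\<lambda>x. INF r\<in>C. r x)" and "\<And>q. q \<in> C \<Longrightarrow> (\<lambda>x. INF r\<in>C. r x) \<le> q"
proof -
  obtain q0 where q0: "q0 \<in> C" using \<open>C \<noteq> {}\<close> by blast
  have "- q0 (- x) \<le> q x" if q: "q \<in> C" for q x
  proof (cases "q \<le> q0")
    case True
    then have "q (- x) \<le> q0 (- x)" by (simp add: le_fun_def)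
    then show ?thesis using sublinear_neg_le[OF sub[OF q], of x] by linarith
  next
    case False
    then have "q0 \<le> q" using chain[OF q q0] by blast
    then have "q0 x \<le> q x" by (rule le_funD)
    then show ?thesis using sublinear_neg_le[OF sub[OF q0], of x] by linarith
  qed
  then have bdd: "bdd_below ((\<lambda>q. q x) ` C)" for x
    by (intro bdd_belowI2)
  have lower: "(INF r\<in>C. r x) \<le> q x" if "q \<in> C" for q x
    by (rule cINF_lower[OF bdd that])
  then show "\<And>q. q \<in> C \<Longrightarrow> (\<lambda>x. INF r\<in>C. r x) \<le> q"
    by (simp add: le_fun_def)
  show "sublinear (\<lambda>x. INF r\<in>C. r x)"
  proof (rule sublinearI_pos_scale_le)
    fix x y
    show "(INF r\<in>C. r (x + y)) \<le> (INF r\<in>C. r x) + (INF r\<in>C. r y)"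
    proof (rule le_cINF_add_cINF[OF \<open>C \<noteq> {}\<close> \<open>C \<noteq> {}\<close>])
      fix q1 q2 assume q12: "q1 \<in> C" "q2 \<in> C"
      obtain q where q: "q \<in> C" "q \<le> q1" "q \<le> q2"
        using chain[OF q12] q12 by blast
      have "(INF r\<in>C. r (x + y)) \<le> q (x + y)" using lower[OF q(1)] .
      also have "\<dots> \<le> q x + q y" using sub[OF q(1)] by (rule sublinear_add_le)
      also have "\<dots> \<le> q1 x + q2 y" using q by (intro add_mono) (auto simp: le_fun_def)
      finally show "(INF r\<in>C. r (x + y)) \<le> q1 x + q2 y" .
    qed
  next
    fix c :: real and x assume "0 < c"
    show "(INF r\<in>C. r (c *\<^sub>R x)) \<le> c * (INF r\<in>C. r x)"
    proof (rule le_mult_cINF[OF \<open>C \<noteq> {}\<close> \<open>0 < c\<close>])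
      fix q assume "q \<in> C"
      then show "(INF r\<in>C. r (c *\<^sub>R x)) \<le> c * q x"
        using lower[of q "c *\<^sub>R x"] sublinear_scaleR[OF sub, of q c x] \<open>0 < c\<close> by simp
    qed
  qed
qed

lemma sublinear_cINF_cone:
  assumes p: "sublinear p" and C: "convex_cone C"
    and g_add: "\<And>x y. x \<in> C \<Longrightarrow> y \<in> C \<Longrightarrow> g (x + y) = g x + g y"
    and g_scale: "\<And>c x. 0 \<le> c \<Longrightarrow> x \<in> C \<Longrightarrow> g (c *\<^sub>R x) = c * g x"
    and g_le: "\<And>x. x \<in> C \<Longrightarrow> g x \<le> p x"
  shows "sublinear (\<lambda>y. INF w\<in>C. p (y + w) - g w)"
    and "\<And>x y. x \<in> C \<Longrightarrow> (INF w\<in>C. p (y + w) - g w) \<le> p (y + x) - g x"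
proof -
  have "C \<noteq> {}" using C by (rule convex_cone_nonempty)
  have "- p (- y) \<le> p (y + x) - g x" if "x \<in> C" for x y
    using sublinear_add_le[OF p, of "y + x" "- y"] g_le[OF that] by simp
  then have bdd: "bdd_below ((\<lambda>x. p (y + x) - g x) ` C)" for y
    by (intro bdd_belowI2)
  show lower: "(INF w\<in>C. p (y + w) - g w) \<le> p (y + x) - g x" if "x \<in> C" for x y
    by (rule cINF_lower[OF bdd that])
  show "sublinear (\<lambda>y. INF w\<in>C. p (y + w) - g w)"
  proof (rule sublinearI_pos_scale_le)
    fix y1 y2
    show "(INF w\<in>C. p (y1 + y2 + w) - g w)
        \<le> (INF w\<in>C. p (y1 + w) - g w) + (INF w\<in>C. p (y2 + w) - g w)"
    proof (rule le_cINF_add_cINF[OF \<open>C \<noteq> {}\<close> \<open>C \<noteq> {}\<close>])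
      fix x1 x2 assume x: "x1 \<in> C" "x2 \<in> C"
      have "(INF w\<in>C. p (y1 + y2 + w) - g w) \<le> p (y1 + y2 + (x1 + x2)) - g (x1 + x2)"
        using x C by (intro lower convex_cone_add)
      also have "y1 + y2 + (x1 + x2) = (y1 + x1) + (y2 + x2)"
        by (simp add: algebra_simps)
      finally show "(INF w\<in>C. p (y1 + y2 + w) - g w) \<le> p (y1 + x1) - g x1 + (p (y2 + x2) - g x2)"
        using sublinear_add_le[OF p, of "y1 + x1" "y2 + x2"] g_add[OF x] by linarith
    qed
  next
    fix c :: real and y assume "0 < c"
    show "(INF w\<in>C. p (c *\<^sub>R y + w) - g w) \<le> c * (INF w\<in>C. p (y + w) - g w)"
    proof (rule le_mult_cINF[OF \<open>C \<noteq> {}\<close> \<open>0 < c\<close>])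
      fix x assume "x \<in> C"
      have "(INF w\<in>C. p (c *\<^sub>R y + w) - g w) \<le> p (c *\<^sub>R y + c *\<^sub>R x) - g (c *\<^sub>R x)"
        using \<open>x \<in> C\<close> \<open>0 < c\<close> C by (intro lower convex_cone_scaleR) auto
      also have "\<dots> = c * (p (y + x) - g x)"
        using sublinear_scaleR[OF p, of c "y + x"] g_scale[of c x] \<open>x \<in> C\<close> \<open>0 < c\<close>
        by (simp add: scaleR_add_right[symmetric] right_diff_distrib del: scaleR_add_right)
      finally show "(INF w\<in>C. p (c *\<^sub>R y + w) - g w) \<le> c * (p (y + x) - g x)" .
    qed
  qed
qed

lemma sublinear_odd_imp_linear:
  assumes q: "sublinear q" and odd: "\<And>x. q (- x) = - q x"
  shows "linear q"
proof (rule linearI)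
  fix x y
  show "q (x + y) = q x + q y"
    using sublinear_add_le[OF q, of x y] sublinear_add_le[OF q, of "- x" "- y"]
      odd[of "x + y"] odd[of x] odd[of y] by (simp add: add.commute)
next
  fix c :: real and x
  show "q (c *\<^sub>R x) = c *\<^sub>R q x"
  proof (cases "0 \<le> c")
    case True
    then show ?thesis using sublinear_scaleR[OF q] by simp
  next
    case False
    then have "q (c *\<^sub>R x) = - q ((- c) *\<^sub>R x)" using odd[of "(- c) *\<^sub>R x"] by simp
    then show ?thesis using sublinear_scaleR[OF q, of "- c" x] False by simp
  qed
qed

lemma minimal_sublinear_imp_linear:
  fixes q :: "'a::real_vector \<Rightarrow> real"
  assumes q: "sublinear q" and minimal: "\<And>r. sublinear r \<Longrightarrow> r \<le> q \<Longrightarrow> r = q"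
  shows "linear q"
proof (rule sublinear_odd_imp_linear[OF q])
  fix z :: 'a
  define ray where "ray = {t *\<^sub>R z | t. 0 \<le> t}"
  have ray: "convex_cone ray"
    unfolding convex_cone_iff
  proof (intro conjI ballI allI impI)
    show "0 \<in> ray" unfolding ray_def by (rule CollectI, rule exI[of _ 0]) simp
  next
    fix x y assume "x \<in> ray" "y \<in> ray"
    then show "x + y \<in> ray"
      unfolding ray_def by (auto simp: scaleR_add_left[symmetric] simp del: scaleR_add_left)
  next
    fix x and c :: real assume "x \<in> ray" "0 \<le> c"
    then obtain t where "0 \<le> t" "x = t *\<^sub>R z" unfolding ray_def by blast
    then show "c *\<^sub>R x \<in> ray"
      unfolding ray_def using \<open>0 \<le> c\<close> by (auto intro!: exI[of _ "c * t"])
  qed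
  have q_ray_add: "q (x + y) = q x + q y" if "x \<in> ray" "y \<in> ray" for x y
    using that sublinear_scaleR[OF q] unfolding ray_def
    by (auto simp: scaleR_add_left[symmetric] distrib_right simp del: scaleR_add_left)
  \<comment> \<open>r is sublinear and below q, hence equal to q; at y = -z and x = z this gives q (-z) \<le> -q z.\<close>
  define r where "r y = (INF x\<in>ray. q (y + x) - q x)" for y
  have r: "sublinear r" "\<And>x y. x \<in> ray \<Longrightarrow> r y \<le> q (y + x) - q x"
    unfolding r_def
    by (intro sublinear_cINF_cone[OF q ray] q_ray_add sublinear_scaleR[OF q] order_refl; assumption)+
  have "0 \<in> ray" using ray by (rule convex_cone_contains_0)
  then have "r \<le> q" using r(2)[of 0] sublinear_0[OF q] by (simp add: le_fun_def)
  then have "r = q" using minimal r(1) by blast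
  moreover have "z \<in> ray" unfolding ray_def by (rule CollectI, rule exI[of _ 1]) simp
  ultimately have "q (- z) \<le> - q z" using r(2)[of z "- z"] sublinear_0[OF q] by simp
  then show "q (- z) = - q z" using sublinear_neg_le[OF q, of z] by linarith
qed

lemma sublinear_dominates_linear:
  fixes p :: "'a::real_vector \<Rightarrow> real"
  assumes p: "sublinear p"
  obtains f where "linear f" "f \<le> p"
proof -
  define S where "S = {q. sublinear q \<and> q \<le> p}"
  have "partial_order_on S (relation_of (\<lambda>q r. r \<le> q) S)"
    by (rule partial_order_on_relation_ofI) auto
  moreover have "\<exists>u\<in>S. \<forall>q\<in>C. u \<le> q" if C: "C \<in> Chains (relation_of (\<lambda>q r. r \<le> q) S)" for C
  proof (cases "C = {}")
    case True
    then show ?thesis using p unfolding S_def by blast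
  next
    case False
    have CS: "C \<subseteq> S" using C by (rule Chains_relation_of)
    have chain: "q \<le> r \<or> r \<le> q" if "q \<in> C" "r \<in> C" for q r
      using C that unfolding Chains_def relation_of_def by blast
    have inf: "sublinear (\<lambda>x. INF r\<in>C. r x)" "\<And>q. q \<in> C \<Longrightarrow> (\<lambda>x. INF r\<in>C. r x) \<le> q"
      using sublinear_cINF_chain[OF False _ chain] CS unfolding S_def by blast+
    obtain q where "q \<in> C" using False by blast
    then have "(\<lambda>x. INF r\<in>C. r x) \<le> p" using inf(2) CS unfolding S_def by fastforce
    then show ?thesis using inf unfolding S_def by blast
  qed
  ultimately obtain m where m: "m \<in> S" and minimal: "\<And>q. q \<in> S \<Longrightarrow> q \<le> m \<Longrightarrow> q = m"
    using predicate_Zorn[of S "\<lambda>q r. r \<le> q"] by blast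
  have "linear m"
    using m minimal unfolding S_def by (intro minimal_sublinear_imp_linear) auto
  then show ?thesis using m that unfolding S_def by blast
qed

theorem Hahn_Banach_sublinear:
  fixes p :: "'a::real_vector \<Rightarrow> real"
  assumes p: "sublinear p" and X: "subspace X"
    and g_add: "\<And>x y. x \<in> X \<Longrightarrow> y \<in> X \<Longrightarrow> g (x + y) = g x + g y"
    and g_scale: "\<And>c x. x \<in> X \<Longrightarrow> g (c *\<^sub>R x) = c * g x"
    and g_le: "\<And>x. x \<in> X \<Longrightarrow> g x \<le> p x"
  obtains f where "linear f" "\<And>x. x \<in> X \<Longrightarrow> f x = g x" "f \<le> p"
proof -
  define q where "q y = (INF x\<in>X. p (y + x) - g x)" for y
  have C: "convex_cone X" using X by (rule subspace_imp_convex_cone)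
  have q: "sublinear q" "\<And>x y. x \<in> X \<Longrightarrow> q y \<le> p (y + x) - g x"
    unfolding q_def
    by (intro sublinear_cINF_cone[OF p C] g_add g_scale g_le; assumption)+
  have "0 \<in> X" using X by (rule subspace_0)
  then have "q \<le> p" using q(2)[of 0] g_scale[of 0 0] by (simp add: le_fun_def)
  obtain f where f: "linear f" "f \<le> q" using q(1) by (rule sublinear_dominates_linear)
  have g_le_f: "g x \<le> f x" if "x \<in> X" for x
  proof -
    have "f (- x) \<le> q (- x)" using f(2) by (rule le_funD)
    also have "\<dots> \<le> - g x" using q(2)[OF that, of "- x"] sublinear_0[OF p] by simp
    finally show ?thesis using linear_neg[OF f(1), of x] by simp
  qed
  have "f x = g x" if "x \<in> X" for x
    using g_le_f[OF that] g_le_f[OF subspace_neg[OF X that]]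
      linear_neg[OF f(1), of x] g_scale[OF that, of "- 1"] by simp
  then show ?thesis using that f \<open>q \<le> p\<close> by (meson order_trans)
qed

corollary Hahn_Banach_norm:
  fixes X :: "'a::real_normed_vector set"
  assumes X: "subspace X"
    and g_add: "\<And>x y. x \<in> X \<Longrightarrow> y \<in> X \<Longrightarrow> g (x + y) = g x + g y"
    and g_scale: "\<And>c x. x \<in> X \<Longrightarrow> g (c *\<^sub>R x) = c * g x"
    and N: "0 \<le> N" and g_bound: "\<And>x. x \<in> X \<Longrightarrow> \<bar>g x\<bar> \<le> N * norm x"
  obtains f where "bounded_linear f" "\<And>x. x \<in> X \<Longrightarrow> f x = g x" "onorm f \<le> N"
proof -
  have p: "sublinear (\<lambda>y. N * norm y)"
    unfolding sublinear_def using N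
    by (auto simp flip: distrib_left intro: mult_left_mono norm_triangle_ineq)
  have g_le: "g x \<le> N * norm x" if "x \<in> X" for x
    using g_bound[OF that] by (rule abs_le_D1)
  obtain f where f: "linear f" "\<And>x. x \<in> X \<Longrightarrow> f x = g x" "f \<le> (\<lambda>y. N * norm y)"
    using Hahn_Banach_sublinear[OF p X g_add g_scale g_le] by blast
  have bound: "norm (f y) \<le> N * norm y" for y
    using le_funD[OF f(3), of y] le_funD[OF f(3), of "- y"] linear_neg[OF f(1), of y] by auto
  have "bounded_linear f"
    using f(1) bound
    by (intro bounded_linear_intro[where K = N]) (auto simp: linear_add linear_scale mult.commute)
  moreover have "onorm f \<le> N" using N bound by (intro onorm_bound)
  ultimately show ?thesis using that f(2) by blast
qed

lemma sub_dualD: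
  assumes "g \<in> sub_dual X"
  shows "\<And>x y. x \<in> X \<Longrightarrow> y \<in> X \<Longrightarrow> g (x + y) = g x + g y"
    and "\<And>c x. x \<in> X \<Longrightarrow> g (c *\<^sub>R x) = c * g x"
    and "\<And>x. x \<notin> X \<Longrightarrow> g x = 0"
    and "\<exists>K. \<forall>x\<in>X. \<bar>g x\<bar> \<le> K * norm x"
  using assms unfolding sub_dual_def by blast+

lemma sub_dual_mult:
  assumes "g \<in> sub_dual X"
  shows "(\<lambda>x. c * g x) \<in> sub_dual X"
proof -
  obtain K where "\<forall>x\<in>X. \<bar>g x\<bar> \<le> K * norm x" using sub_dualD(4)[OF assms] by blast
  then have "\<forall>x\<in>X. \<bar>c * g x\<bar> \<le> (\<bar>c\<bar> * K) * norm x"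
    by (simp add: abs_mult mult.assoc mult_left_mono)
  then have "\<exists>K. \<forall>x\<in>X. \<bar>c * g x\<bar> \<le> K * norm x" by blast
  then show ?thesis
    using sub_dualD(1-3)[OF assms] unfolding sub_dual_def by (auto simp: algebra_simps)
qed

lemma restr_sub_dual:
  assumes X: "subspace X" and f: "bounded_linear f"
  shows "restr X f \<in> sub_dual X"
proof -
  have "\<bar>f x\<bar> \<le> onorm f * norm x" for x using onorm[OF f, of x] by simp
  then show ?thesis
    using X linear_add[OF bounded_linear.linear[OF f]] linear_scale[OF bounded_linear.linear[OF f]]
    unfolding sub_dual_def restr_def by (auto simp: subspace_add subspace_scale)
qed

lemma restr_eq_sub_dual_iff:
  assumes "g \<in> sub_dual X"
  shows "restr X f = g \<longleftrightarrow> (\<forall>x\<in>X. f x = g x)"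
  using sub_dualD(3)[OF assms] unfolding restr_def fun_eq_iff by auto

lemma sub_dual_0:
  assumes "g \<in> sub_dual X" and "0 \<in> X"
  shows "g 0 = 0"
  using sub_dualD(2)[OF assms(1) assms(2), of 0] by simp

lemma bdd_above_sub_dual_norm:
  assumes "g \<in> sub_dual X"
  shows "bdd_above {\<bar>g x\<bar> | x. x \<in> X \<and> norm x \<le> 1}"
proof -
  obtain K where K: "\<forall>x\<in>X. \<bar>g x\<bar> \<le> K * norm x" using sub_dualD(4)[OF assms] by blast
  have "\<bar>g x\<bar> \<le> \<bar>K\<bar>" if "x \<in> X" "norm x \<le> 1" for x
  proof -
    have "K * norm x \<le> \<bar>K\<bar> * norm x" by (simp add: mult_right_mono)
    then have "\<bar>g x\<bar> \<le> \<bar>K\<bar> * norm x" using K that(1) by fastforce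
    also have "\<dots> \<le> \<bar>K\<bar>" using that(2) by (simp add: mult_left_le)
    finally show ?thesis .
  qed
  then show ?thesis by (intro bdd_aboveI[where M = "\<bar>K\<bar>"]) blast
qed

lemma sub_dual_norm_nonneg:
  assumes "subspace X" and "g \<in> sub_dual X"
  shows "0 \<le> sub_dual_norm X g"
proof -
  have "0 \<in> X" using assms(1) by (rule subspace_0)
  then have "\<bar>g 0\<bar> \<in> {\<bar>g x\<bar> | x. x \<in> X \<and> norm x \<le> 1}" by auto
  then have "\<bar>g 0\<bar> \<le> sub_dual_norm X g"
    unfolding sub_dual_norm_def by (rule cSup_upper[OF _ bdd_above_sub_dual_norm[OF assms(2)]])
  then show ?thesis by simp
qed

lemma sub_dual_norm_bound:
  assumes X: "subspace X" and g: "g \<in> sub_dual X" and x: "x \<in> X"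
  shows "\<bar>g x\<bar> \<le> sub_dual_norm X g * norm x"
proof (cases "x = 0")
  case True
  then show ?thesis using sub_dual_0[OF g] x by simp
next
  case False
  define y where "y = (1 / norm x) *\<^sub>R x"
  have "y \<in> X" "norm y \<le> 1" unfolding y_def using X x False by (auto intro: subspace_scale)
  then have "\<bar>g y\<bar> \<le> sub_dual_norm X g"
    unfolding sub_dual_norm_def by (auto intro: cSup_upper[OF _ bdd_above_sub_dual_norm[OF g]])
  moreover have "\<bar>g y\<bar> = \<bar>g x\<bar> / norm x"
    unfolding y_def using sub_dualD(2)[OF g x] by (simp add: abs_mult)
  ultimately show ?thesis using False by (simp add: divide_le_eq)
qed

lemma sub_dual_norm_least:
  assumes "subspace X" and "0 \<le> M" and bound: "\<And>x. x \<in> X \<Longrightarrow> \<bar>g x\<bar> \<le> M * norm x"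
  shows "sub_dual_norm X g \<le> M"
  unfolding sub_dual_norm_def
proof (rule cSup_least)
  show "{\<bar>g x\<bar> | x. x \<in> X \<and> norm x \<le> 1} \<noteq> {}" using subspace_0[OF assms(1)] by auto
next
  fix a assume "a \<in> {\<bar>g x\<bar> | x. x \<in> X \<and> norm x \<le> 1}"
  then obtain x where "a = \<bar>g x\<bar>" "x \<in> X" "norm x \<le> 1" by blast
  then show "a \<le> M" using bound[of x] mult_left_le[of "norm x" M] \<open>0 \<le> M\<close> by linarith
qed

lemma sub_dual_norm_mult:
  assumes X: "subspace X" and g: "g \<in> sub_dual X"
  shows "sub_dual_norm X (\<lambda>x. c * g x) = \<bar>c\<bar> * sub_dual_norm X g"
proof -
  have le: "sub_dual_norm X (\<lambda>x. c * h x) \<le> \<bar>c\<bar> * sub_dual_norm X h"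
    if h: "h \<in> sub_dual X" for c h
  proof (rule sub_dual_norm_least[OF X])
    show "0 \<le> \<bar>c\<bar> * sub_dual_norm X h" using sub_dual_norm_nonneg[OF X h] by simp
    fix x assume "x \<in> X"
    then have "\<bar>c\<bar> * \<bar>h x\<bar> \<le> \<bar>c\<bar> * (sub_dual_norm X h * norm x)"
      using sub_dual_norm_bound[OF X h] by (simp add: mult_left_mono)
    then show "\<bar>c * h x\<bar> \<le> \<bar>c\<bar> * sub_dual_norm X h * norm x"
      by (simp add: abs_mult mult.assoc)
  qed
  show ?thesis
  proof (cases "c = 0")
    case True
    then show ?thesis
      using sub_dual_norm_nonneg[OF X sub_dual_mult[OF g, of c]] le[OF g, of c] by simp
  next
    case False
    have "sub_dual_norm X g \<le> \<bar>1 / c\<bar> * sub_dual_norm X (\<lambda>x. c * g x)"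
      using le[OF sub_dual_mult[OF g, of c], of "1 / c"] False by simp
    then have "\<bar>c\<bar> * sub_dual_norm X g \<le> sub_dual_norm X (\<lambda>x. c * g x)"
      using False by (simp add: le_divide_eq mult.commute)
    then show ?thesis using le[OF g, of c] by linarith
  qed
qed

lemma sub_dual_norm_restr_le:
  assumes "subspace X" and f: "bounded_linear f"
  shows "sub_dual_norm X (restr X f) \<le> onorm f"
  using assms(1) onorm_pos_le[OF f] onorm[OF f]
  by (intro sub_dual_norm_least) (auto simp: restr_def)

lemma norm_preserving_extension:
  assumes X: "subspace X" and g: "g \<in> sub_dual X"
  obtains f where "bounded_linear f" "restr X f = g" "onorm f = sub_dual_norm X g"
proof -
  obtain f where f: "bounded_linear f" "\<And>x. x \<in> X \<Longrightarrow> f x = g x" "onorm f \<le> sub_dual_norm X g"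
    using Hahn_Banach_norm[OF X sub_dualD(1,2)[OF g] sub_dual_norm_nonneg[OF X g]
        sub_dual_norm_bound[OF X g]] by blast
  have "restr X f = g" using f(2) restr_eq_sub_dual_iff[OF g] by blast
  moreover have "sub_dual_norm X g \<le> onorm f"
    using sub_dual_norm_restr_le[OF X f(1)] \<open>restr X f = g\<close> by simp
  ultimately show ?thesis using that f(1,3) by fastforce
qed

lemma restr_image_HB_set:
  assumes X: "subspace X"
  shows "restr X ` HB_set X = sub_dual_sphere X"
proof
  show "restr X ` HB_set X \<subseteq> sub_dual_sphere X"
    using restr_sub_dual[OF X] by (auto simp: HB_set_def sub_dual_sphere_def dual_space_def)
next
  show "sub_dual_sphere X \<subseteq> restr X ` HB_set X"
  proof
    fix g assume "g \<in> sub_dual_sphere X"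
    then have g: "g \<in> sub_dual X" "sub_dual_norm X g = 1" by (auto simp: sub_dual_sphere_def)
    obtain f where "bounded_linear f" "restr X f = g" "onorm f = sub_dual_norm X g"
      using norm_preserving_extension[OF X g(1)] by blast
    then show "g \<in> restr X ` HB_set X" using g by (auto simp: HB_set_def dual_space_def)
  qed
qed

lemma normalized_in_HB_set:
  assumes X: "subspace X" and f: "bounded_linear f"
    and norm_eq: "onorm f = sub_dual_norm X (restr X f)" and pos: "0 < onorm f"
  shows "(\<lambda>x. f x / onorm f) \<in> HB_set X"
proof -
  have "bounded_linear (\<lambda>x. f x / onorm f)"
    using bounded_linear_divide f by (rule bounded_linear_compose)
  moreover have "onorm (\<lambda>x. f x / onorm f) = 1"
    using onorm_scaleR[OF f, of "1 / onorm f"] pos by simp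
  moreover have "restr X (\<lambda>x. f x / onorm f) = (\<lambda>x. (1 / onorm f) * restr X f x)"
    by (simp add: restr_def fun_eq_iff)
  then have "sub_dual_norm X (restr X (\<lambda>x. f x / onorm f))
      = \<bar>1 / onorm f\<bar> * sub_dual_norm X (restr X f)"
    by (simp only: sub_dual_norm_mult[OF X restr_sub_dual[OF X f]])
  then have "sub_dual_norm X (restr X (\<lambda>x. f x / onorm f)) = 1"
    using norm_eq pos by simp
  ultimately show ?thesis by (simp add: HB_set_def dual_space_def)
qed

lemma norm_preserving_extension_unique:
  assumes X: "subspace X" and inj: "inj_on (restr X) (HB_set X)"
    and f1: "bounded_linear f1" "onorm f1 = sub_dual_norm X (restr X f1)"
    and f2: "bounded_linear f2" "onorm f2 = sub_dual_norm X (restr X f2)"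
    and eq: "restr X f1 = restr X f2"
  shows "f1 = f2"
proof -
  define N where "N = onorm f1"
  have N2: "onorm f2 = N" using f1(2) f2(2) eq by (simp add: N_def)
  show ?thesis
  proof (cases "N = 0")
    case True
    then show ?thesis using onorm_eq_0[OF f1(1)] onorm_eq_0[OF f2(1)] N2 by (auto simp: N_def)
  next
    case False
    then have "0 < N" using onorm_pos_le[OF f1(1)] by (simp add: N_def)
    have "restr X (\<lambda>x. f x / N) = (\<lambda>x. restr X f x / N)" for f
      by (simp add: restr_def fun_eq_iff)
    then have "restr X (\<lambda>x. f1 x / N) = restr X (\<lambda>x. f2 x / N)"
      using eq by simp
    moreover have "(\<lambda>x. f1 x / N) \<in> HB_set X" "(\<lambda>x. f2 x / N) \<in> HB_set X"
      using normalized_in_HB_set[OF X f1] normalized_in_HB_set[OF X f2] \<open>0 < N\<close> N2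
      by (simp_all add: N_def)
    ultimately have "(\<lambda>x. f1 x / N) = (\<lambda>x. f2 x / N)" using inj_onD[OF inj] by blast
    then show ?thesis using \<open>0 < N\<close> by (simp add: fun_eq_iff)
  qed
qed

lemma property_U_iff_inj_on_HB_set:
  assumes X: "subspace X"
  shows "property_U X \<longleftrightarrow> inj_on (restr X) (HB_set X)"
proof
  assume U: "property_U X"
  show "inj_on (restr X) (HB_set X)"
  proof (rule inj_onI)
    fix f1 f2 assume f: "f1 \<in> HB_set X" "f2 \<in> HB_set X" "restr X f1 = restr X f2"
    then have "restr X f1 \<in> sub_dual X"
      using restr_sub_dual[OF X] by (auto simp: HB_set_def dual_space_def)
    then have "\<exists>!f. f \<in> dual_space \<and> restr X f = restr X f1 \<and> onorm f = sub_dual_norm X (restr X f1)"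
      using U unfolding property_U_def by blast
    moreover have "f1 \<in> dual_space \<and> restr X f1 = restr X f1 \<and> onorm f1 = sub_dual_norm X (restr X f1)"
      "f2 \<in> dual_space \<and> restr X f2 = restr X f1 \<and> onorm f2 = sub_dual_norm X (restr X f1)"
      using f by (simp_all add: HB_set_def)
    ultimately show "f1 = f2" by blast
  qed
next
  assume inj: "inj_on (restr X) (HB_set X)"
  show "property_U X"
    unfolding property_U_def
  proof
    fix g assume g: "g \<in> sub_dual X"
    obtain f where f: "bounded_linear f" "restr X f = g" "onorm f = sub_dual_norm X g"
      using norm_preserving_extension[OF X g] by blast
    show "\<exists>!f. f \<in> dual_space \<and> restr X f = g \<and> onorm f = sub_dual_norm X g"
    proof (rule ex1I[of _ f])
      show "f \<in> dual_space \<and> restr X f = g \<and> onorm f = sub_dual_norm X g"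
        using f by (simp add: dual_space_def)
    next
      fix f' assume f': "f' \<in> dual_space \<and> restr X f' = g \<and> onorm f' = sub_dual_norm X g"
      show "f' = f"
      proof (rule norm_preserving_extension_unique[OF X inj])
        show "bounded_linear f'" "bounded_linear f" using f' f(1) by (simp_all add: dual_space_def)
        show "onorm f' = sub_dual_norm X (restr X f')" "onorm f = sub_dual_norm X (restr X f)"
          "restr X f' = restr X f"
          using f' f(2,3) by simp_all
      qed
    qed
  qed
qed

lemma Hausdorff_space_fun: "Hausdorff_space (euclidean :: ('a \<Rightarrow> 'b::metric_space) topology)"
  unfolding euclidean_product_topology[symmetric] Hausdorff_space_product_topology by simp

lemma compact_imp_closed_fun:
  fixes K :: "('a \<Rightarrow> 'b::metric_space) set"
  assumes "compact K"
  shows "closed K"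
proof -
  have "compactin euclidean K" using assms by simp
  then have "closedin euclidean K" by (rule compactin_imp_closedin[OF Hausdorff_space_fun])
  then show ?thesis using closed_closedin by blast
qed

lemma continuous_on_restr: "continuous_on UNIV (restr X :: ('a \<Rightarrow> real) \<Rightarrow> _)"
proof (rule continuous_on_coordinatewise_then_product)
  fix x
  show "continuous_on UNIV (\<lambda>f::'a \<Rightarrow> real. restr X f x)"
    unfolding restr_def by (cases "x \<in> X") simp_all
qed

lemma bounded_linear_onorm_le_1_iff:
  fixes f :: "'a::real_normed_vector \<Rightarrow> real"
  shows "bounded_linear f \<and> onorm f \<le> 1 \<longleftrightarrow> (\<forall>x. f x \<in> {- norm x..norm x})
    \<and> (\<forall>x y. f (x + y) = f x + f y) \<and> (\<forall>c x. f (c *\<^sub>R x) = c * f x)"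
proof
  assume f: "bounded_linear f \<and> onorm f \<le> 1"
  have "\<bar>f x\<bar> \<le> norm x" for x
  proof -
    have "\<bar>f x\<bar> \<le> onorm f * norm x" using onorm[of f x] f by simp
    also have "\<dots> \<le> norm x" using f mult_right_mono[of "onorm f" 1 "norm x"] by simp
    finally show ?thesis .
  qed
  then have "f x \<in> {- norm x..norm x}" for x
    by (simp add: abs_le_iff minus_le_iff)
  moreover have "linear f" using f bounded_linear.linear by blast
  ultimately show "(\<forall>x. f x \<in> {- norm x..norm x})
      \<and> (\<forall>x y. f (x + y) = f x + f y) \<and> (\<forall>c x. f (c *\<^sub>R x) = c * f x)"
    using linear_add linear_scale by fastforce
next
  assume f: "(\<forall>x. f x \<in> {- norm x..norm x})
    \<and> (\<forall>x y. f (x + y) = f x + f y) \<and> (\<forall>c x. f (c *\<^sub>R x) = c * f x)"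
  then have bound: "\<bar>f x\<bar> \<le> norm x" for x
    by (simp add: abs_le_iff minus_le_iff)
  have "bounded_linear f" using f bound by (intro bounded_linear_intro[where K = 1]) auto
  moreover have "onorm f \<le> 1" using bound by (intro onorm_bound) auto
  ultimately show "bounded_linear f \<and> onorm f \<le> 1" ..
qed

lemma compact_dual_unit_ball:
  "compact {f::'a::real_normed_vector \<Rightarrow> real. bounded_linear f \<and> onorm f \<le> 1}"
proof -
  have "compactin (product_topology (\<lambda>_. euclidean) UNIV) (\<Pi>\<^sub>E x\<in>UNIV. {- norm x..norm (x::'a)})"
    by (subst compactin_PiE) auto
  then have "compact (\<Pi> x\<in>UNIV. {- norm x..norm (x::'a)})"
    unfolding euclidean_product_topology PiE_UNIV_domain by simp
  moreover have "closed {f::'a \<Rightarrow> real. \<forall>x y. f (x + y) = f x + f y}"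
  proof (intro closed_Collect_all closed_Collect_eq)
    fix x y :: 'a
    show "continuous_on UNIV (\<lambda>f::'a \<Rightarrow> real. f (x + y))" by (rule continuous_on_product_coordinates)
    show "continuous_on UNIV (\<lambda>f::'a \<Rightarrow> real. f x + f y)"
      by (intro continuous_on_add continuous_on_product_coordinates)
  qed
  moreover have "closed {f::'a \<Rightarrow> real. \<forall>c x. f (c *\<^sub>R x) = c * f x}"
  proof (intro closed_Collect_all closed_Collect_eq)
    fix c :: real and x :: 'a
    show "continuous_on UNIV (\<lambda>f::'a \<Rightarrow> real. f (c *\<^sub>R x))" by (rule continuous_on_product_coordinates)
    show "continuous_on UNIV (\<lambda>f::'a \<Rightarrow> real. c * f x)"
      by (intro continuous_on_mult continuous_on_const continuous_on_product_coordinates)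
  qed
  ultimately have "compact ((\<Pi> x\<in>UNIV. {- norm x..norm (x::'a)})
      \<inter> {f. \<forall>x y. f (x + y) = f x + f y} \<inter> {f. \<forall>c x. f (c *\<^sub>R x) = c * f x})"
    by (intro compact_Int_closed closed_Int)
  also have "\<dots> = {f. bounded_linear f \<and> onorm f \<le> 1}"
    unfolding bounded_linear_onorm_le_1_iff by auto
  finally show ?thesis .
qed

lemma restr_image_HB_set_Int:
  assumes X: "subspace X"
  shows "restr X ` (HB_set X \<inter> T)
    = sub_dual_sphere X \<inter> restr X ` ({f. bounded_linear f \<and> onorm f \<le> 1} \<inter> T)"
proof
  show "restr X ` (HB_set X \<inter> T)
      \<subseteq> sub_dual_sphere X \<inter> restr X ` ({f. bounded_linear f \<and> onorm f \<le> 1} \<inter> T)"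
    using restr_image_HB_set[OF X] by (auto simp: HB_set_def dual_space_def)
next
  show "sub_dual_sphere X \<inter> restr X ` ({f. bounded_linear f \<and> onorm f \<le> 1} \<inter> T)
      \<subseteq> restr X ` (HB_set X \<inter> T)"
  proof
    fix g assume "g \<in> sub_dual_sphere X \<inter> restr X ` ({f. bounded_linear f \<and> onorm f \<le> 1} \<inter> T)"
    then obtain f where f: "bounded_linear f" "onorm f \<le> 1" "f \<in> T" "g = restr X f"
      and norm_g: "sub_dual_norm X g = 1"
      by (auto simp: sub_dual_sphere_def)
    have "onorm f = 1" using sub_dual_norm_restr_le[OF X f(1)] f(2,4) norm_g by simp
    then have "f \<in> HB_set X" using f(1,4) norm_g by (simp add: HB_set_def dual_space_def)
    then show "g \<in> restr X ` (HB_set X \<inter> T)" using f(3,4) by blast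
  qed
qed

lemma homeomorphic_map_restr_HB_set:
  assumes X: "subspace X" and inj: "inj_on (restr X) (HB_set X)"
  shows "homeomorphic_map (top_of_set (HB_set X)) (top_of_set (sub_dual_sphere X)) (restr X)"
proof (rule bijective_closed_imp_homeomorphic_map)
  show "continuous_map (top_of_set (HB_set X)) (top_of_set (sub_dual_sphere X)) (restr X)"
    using continuous_on_restr[of X] restr_image_HB_set[OF X] by (auto intro: continuous_on_subset)
  show "restr X ` topspace (top_of_set (HB_set X)) = topspace (top_of_set (sub_dual_sphere X))"
    using restr_image_HB_set[OF X] by simp
  show "inj_on (restr X) (topspace (top_of_set (HB_set X)))" using inj by simp
  show "closed_map (top_of_set (HB_set X)) (top_of_set (sub_dual_sphere X)) (restr X)"
    unfolding closed_map_def
  proof (intro allI impI)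
    fix U assume "closedin (top_of_set (HB_set X)) U"
    then obtain T where T: "closed T" "U = HB_set X \<inter> T" by (auto simp: closedin_closed)
    have "compact (restr X ` ({f. bounded_linear f \<and> onorm f \<le> 1} \<inter> T))"
      using compact_Int_closed[OF compact_dual_unit_ball T(1)] continuous_on_restr[of X]
      by (intro compact_continuous_image) (auto intro: continuous_on_subset)
    then show "closedin (top_of_set (sub_dual_sphere X)) (restr X ` U)"
      unfolding T(2) restr_image_HB_set_Int[OF X]
      by (intro closedin_closed_Int compact_imp_closed_fun)
  qed
qed

theorem proposition1p5:
  fixes X :: "'a::banach set"
  assumes "subspace X" and "closed X"
  shows "restr X ` HB_set X = sub_dual_sphere X
         \<and> (property_U X \<longleftrightarrow> inj_on (restr X) (HB_set X))
         \<and> (property_U X \<longrightarrow>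
              homeomorphic_map (subtopology euclidean (HB_set X))
                               (subtopology euclidean (sub_dual_sphere X)) (restr X))"
  using restr_image_HB_set[OF assms(1)] property_U_iff_inj_on_HB_set[OF assms(1)]
    homeomorphic_map_restr_HB_set[OF assms(1)] by blast

end
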